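(* Let $x,y$ be nonzero complex numbers, $N\ge1$ and $0\le j,k\le N$; put $m=\min(j,k)$, $M=\max(j,k)$ and $c=\frac{1+xy}{2\sqrt{xy}}$. Then the skew Schur polynomial indexed by the shape $(N,j)/(k)$ and evaluated at the two variables $x,y^{-1}$ satisfies $$s_{(N,j)/(k)}(x,y^{-1})=(xy^{-1})^{(N+j-k)/2}\,U_{m}(c)\,U_{N-M}(c)=\frac{1}{x^{k}y^{N+j}}\sum_{r=0}^{m}(xy)^r\sum_{r=M}^{N}(xy)^r,$$ where $U_n$ are the Chebyshev polynomials of the second kind.
   Context: Chebyshev polynomials of the second kind: $U_0(z)=1$, $U_1(z)=2z$, $U_{n+1}(z)=2zU_n(z)-U_{n-1}(z)$. $s_{(N,j)/(k)}$ denotes the skew Schur polynomial of the skew shape obtained from the partition $(N,j)$ by removing the partition $(k)$ (it is $0$ unless $(k)\subseteq(N,j)$). The same branch of $\sqrt{xy}$ is used throughout. *)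

theory Defs
  imports Complex_Main
begin

fun chebU :: "nat \<Rightarrow> complex \<Rightarrow> complex" where
  "chebU 0 z = 1"
| "chebU (Suc 0) z = 2 * z"
| "chebU (Suc (Suc n)) z = 2 * z * chebU (Suc n) z - chebU n z"

text \<open>Young diagram of a partition given as a list of row lengths (0-indexed cells (row, column)).\<close>
definition diagram :: "nat list \<Rightarrow> (nat \<times> nat) set" where
  "diagram lam = {(i, c). i < length lam \<and> c < lam ! i}"

definition skew_diagram :: "nat list \<Rightarrow> nat list \<Rightarrow> (nat \<times> nat) set" where
  "skew_diagram lam mu = diagram lam - diagram mu"

definition ssyt :: "nat \<Rightarrow> (nat \<times> nat) set \<Rightarrow> ((nat \<times> nat) \<Rightarrow> nat) set" where
  "ssyt n D = {T. (\<forall>p. p \<notin> D \<longrightarrow> T p = 0) \<and> (\<forall>p\<in>D. 1 \<le> T p \<and> T p \<le> n)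
      \<and> (\<forall>i c c'. (i, c) \<in> D \<and> (i, c') \<in> D \<and> c < c' \<longrightarrow> T (i, c) \<le> T (i, c'))
      \<and> (\<forall>i i' c. (i, c) \<in> D \<and> (i', c) \<in> D \<and> i < i' \<longrightarrow> T (i, c) < T (i', c))}"

definition is_partition :: "nat list \<Rightarrow> bool" where
  "is_partition lam = sorted (rev lam)"

definition skew_schur :: "nat \<Rightarrow> (nat \<Rightarrow> 'a::comm_ring_1) \<Rightarrow> nat list \<Rightarrow> nat list \<Rightarrow> 'a" where
  "skew_schur n x lam mu =
     (if diagram mu \<subseteq> diagram lam then
        (\<Sum>T\<in>ssyt n (skew_diagram lam mu). \<Prod>p\<in>skew_diagram lam mu. x (T p))
      else 0)"

end

theory Submission
  imports Defs
begin

text \<open>With the substitution \<open>c = (1 + s\<^sup>2) / (2 s)\<close> the Chebyshev polynomial \<open>U\<^sub>n(c)\<close> becomes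
  the symmetric geometric sum \<open>s\<^sup>-\<^sup>n (1 + s\<^sup>2 + \<dots> + s\<^sup>2\<^sup>n)\<close>, so both sides of the theorem are
  products of two geometric sums in \<open>xy = s\<^sup>2\<close>. On the combinatorial side, a semistandard tableau
  of shape \<open>(N,j)/(k)\<close> in the letters 1, 2 is determined by the number \<open>a\<close> of 1s in its second row
  and the column \<open>b\<close> where the 2s of its first row begin; column strictness amounts to
  \<open>a \<le> min j k\<close> and \<open>max j k \<le> b \<le> N\<close>, and the weight of the tableau is
  \<open>(xy)\<^sup>a (xy)\<^sup>b / (x\<^sup>k y\<^sup>N\<^sup>+\<^sup>j)\<close>.\<close>

lemma chebU_times_power_eq_geometric_sum:
  fixes s :: complex
  assumes "s \<noteq> 0" and "z = (1 + s\<^sup>2) / (2 * s)"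
  shows "chebU n z * s ^ n = (\<Sum>i\<le>n. (s\<^sup>2) ^ i)"
  using assms(2)
proof (induction n z rule: chebU.induct)
  case (1 z)
  then show ?case by simp
next
  case (2 z)
  then show ?case using assms(1) by (simp add: field_simps power2_eq_square)
next
  case (3 n z)
  have twice_sz: "2 * s * z = 1 + s\<^sup>2"
    using assms(1) 3(3) by (simp add: field_simps)
  have "chebU (Suc (Suc n)) z * s ^ Suc (Suc n)
      = (2 * s * z) * (chebU (Suc n) z * s ^ Suc n) - s\<^sup>2 * (chebU n z * s ^ n)"
    by (simp add: algebra_simps power2_eq_square)
  also have "\<dots> = (1 + s\<^sup>2) * (\<Sum>i\<le>Suc n. (s\<^sup>2) ^ i) - s\<^sup>2 * (\<Sum>i\<le>n. (s\<^sup>2) ^ i)"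
    using 3 twice_sz by simp
  also have "\<dots> = (\<Sum>i\<le>Suc n. (s\<^sup>2) ^ i) + (s\<^sup>2) ^ Suc (Suc n)"
  proof -
    have "s\<^sup>2 * (\<Sum>i\<le>Suc n. (s\<^sup>2) ^ i) = s\<^sup>2 * (\<Sum>i\<le>n. (s\<^sup>2) ^ i) + (s\<^sup>2) ^ Suc (Suc n)"
      by (simp add: distrib_left)
    then show ?thesis by (simp add: distrib_right)
  qed
  also have "\<dots> = (\<Sum>i\<le>Suc (Suc n). (s\<^sup>2) ^ i)"
    by simp
  finally show ?case .
qed

lemma chebU_product_eq_geometric_sums:
  fixes x y s :: complex and N j k :: nat
  assumes "x \<noteq> 0" "y \<noteq> 0" "j \<le> N" "k \<le> N" and "s\<^sup>2 = x * y"
  defines "c \<equiv> (1 + x * y) / (2 * s)"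
  shows "(s / y) ^ (N + j - k) * chebU (min j k) c * chebU (N - max j k) c
       = 1 / (x ^ k * y ^ (N + j)) * (\<Sum>r=0..min j k. (x * y) ^ r) * (\<Sum>r=max j k..N. (x * y) ^ r)"
proof -
  define m M e where "m = min j k" and "M = max j k" and "e = N + j - k"
  have "s \<noteq> 0" using assms(1,2,5) by auto
  have U: "chebU n c = (\<Sum>r=0..n. (x * y) ^ r) / s ^ n" for n
    using chebU_times_power_eq_geometric_sum[OF \<open>s \<noteq> 0\<close>, of c n] \<open>s \<noteq> 0\<close> assms(5)
    by (simp add: c_def atLeast0AtMost field_simps)
  have "M \<le> N" using assms(3,4) by (simp add: M_def)
  have shifted: "(\<Sum>r=M..N. (x * y) ^ r) = (x * y) ^ M * (\<Sum>r=0..N - M. (x * y) ^ r)"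
    using sum_power_shift[OF \<open>M \<le> N\<close>] by (simp add: atLeast0AtMost)
  have exponents: "e + 2 * k = m + (N - M) + 2 * M"
    using assms(3,4) by (simp add: m_def M_def e_def)
  have "N + j = e + k" using assms(4) by (simp add: e_def)
  then have "x ^ k * y ^ (N + j) = (x * y) ^ k * y ^ e"
    by (simp add: power_add power_mult_distrib)
  then have "s ^ e * (x ^ k * y ^ (N + j)) = s ^ (e + 2 * k) * y ^ e"
    by (simp add: assms(5)[symmetric] power_add power_mult)
  also have "\<dots> = s ^ m * s ^ (N - M) * (x * y) ^ M * y ^ e"
    unfolding exponents by (simp add: assms(5)[symmetric] power_mult power_add)
  finally have "s ^ e * (x ^ k * y ^ (N + j)) = s ^ m * s ^ (N - M) * (x * y) ^ M * y ^ e" .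
  then show ?thesis
    unfolding m_def[symmetric] M_def[symmetric] e_def[symmetric] U shifted
    using \<open>s \<noteq> 0\<close> assms(1,2) by (simp add: field_simps)
qed

definition ones_before :: "nat \<Rightarrow> nat \<Rightarrow> nat" where
  "ones_before b c = (if c < b then 1 else 2)"

lemma weakly_increasing_two_valued_eq_ones_before:
  fixes f :: "nat \<Rightarrow> nat"
  assumes "lo \<le> hi"
    and in_range: "\<And>c. lo \<le> c \<Longrightarrow> c < hi \<Longrightarrow> f c \<in> {1, 2}"
    and mono: "\<And>c c'. lo \<le> c \<Longrightarrow> c < c' \<Longrightarrow> c' < hi \<Longrightarrow> f c \<le> f c'"
  obtains b where "lo \<le> b" "b \<le> hi" "\<And>c. lo \<le> c \<Longrightarrow> c < hi \<Longrightarrow> f c = ones_before b c"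
proof
  define P where "P c \<longleftrightarrow> lo \<le> c \<and> (c = hi \<or> f c = 2)" for c
  define b where "b = (LEAST c. P c)"
  have "P hi" using assms(1) by (simp add: P_def)
  then have "P b" "b \<le> hi" unfolding b_def by (auto intro: LeastI Least_le)
  then show "lo \<le> b" "b \<le> hi" by (auto simp: P_def)
  fix c assume c: "lo \<le> c" "c < hi"
  show "f c = ones_before b c"
  proof (cases "c < b")
    case True
    then have "\<not> P c" unfolding b_def by (rule not_less_Least)
    then show ?thesis using True c in_range[OF c] by (auto simp: P_def ones_before_def)
  next
    case False
    then have "f b = 2" using \<open>P b\<close> c by (auto simp: P_def)
    then have "2 \<le> f c" using mono[of b c] \<open>P b\<close> c False by (cases "b = c") (auto simp: P_def)
    then show ?thesis using False in_range[OF c] by (auto simp: ones_before_def)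
  qed
qed

lemma ones_before_eq_imp_eq:
  assumes "lo \<le> b" "b \<le> hi" "lo \<le> b'" "b' \<le> hi"
    and "\<And>c. lo \<le> c \<Longrightarrow> c < hi \<Longrightarrow> ones_before b c = ones_before b' c"
  shows "b = b'"
proof (rule ccontr)
  assume "b \<noteq> b'"
  moreover have "lo \<le> min b b'" "min b b' < hi" using assms(1-4) \<open>b \<noteq> b'\<close> by auto
  then have "ones_before b (min b b') = ones_before b' (min b b')" by (rule assms(5))
  ultimately show False by (auto simp: ones_before_def min_def split: if_splits)
qed

lemma prod_ones_before:
  assumes "lo \<le> b" "b \<le> hi"
  shows "(\<Prod>c=lo..<hi. w (ones_before b c)) = w 1 ^ (b - lo) * w 2 ^ (hi - b)"
proof -
  have "(\<Prod>c=lo..<hi. w (ones_before b c))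
      = (\<Prod>c=lo..<b. w (ones_before b c)) * (\<Prod>c=b..<hi. w (ones_before b c))"
    using assms by (simp add: prod.atLeastLessThan_concat)
  also have "\<dots> = (\<Prod>c=lo..<b. w 1) * (\<Prod>c=b..<hi. w 2)"
    by (simp add: ones_before_def)
  finally show ?thesis by simp
qed

definition two_row_tableau :: "nat \<Rightarrow> nat \<Rightarrow> nat \<Rightarrow> nat \<Rightarrow> nat \<Rightarrow> nat \<times> nat \<Rightarrow> nat" where
  "two_row_tableau N j k a b = (\<lambda>(i, c).
     if i = 0 \<and> k \<le> c \<and> c < N then ones_before b c
     else if i = 1 \<and> c < j then ones_before a c else 0)"

definition two_row_cells :: "nat \<Rightarrow> nat \<Rightarrow> nat \<Rightarrow> (nat \<times> nat) set" where
  "two_row_cells N j k = Pair 0 ` {k..<N} \<union> Pair 1 ` {0..<j}"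

lemma mem_two_row_cells [simp]:
  "(i, c) \<in> two_row_cells N j k \<longleftrightarrow> (i = 0 \<and> k \<le> c \<and> c < N) \<or> (i = 1 \<and> c < j)"
  by (auto simp: two_row_cells_def)

lemma skew_diagram_two_rows:
  assumes "j \<le> N" "k \<le> N"
  shows "skew_diagram [N, j] [k] = two_row_cells N j k"
  using assms unfolding skew_diagram_def diagram_def two_row_cells_def
  by (auto simp: less_Suc_eq nth_Cons split: nat.splits)

lemma ssyt_two_row_cells_obtain_cut_points:
  assumes "k \<le> N" and "T \<in> ssyt 2 (two_row_cells N j k)"
  obtains a b where "a \<le> j" "k \<le> b" "b \<le> N" "T = two_row_tableau N j k a b"
proof -
  from assms(2) have outside: "\<And>p. p \<notin> two_row_cells N j k \<Longrightarrow> T p = 0"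
    and in_range: "\<And>p. p \<in> two_row_cells N j k \<Longrightarrow> 1 \<le> T p \<and> T p \<le> 2"
    and row: "\<And>i c c'. (i, c) \<in> two_row_cells N j k \<Longrightarrow> (i, c') \<in> two_row_cells N j k \<Longrightarrow> c < c'
                \<Longrightarrow> T (i, c) \<le> T (i, c')"
    unfolding ssyt_def by auto
  have row0_range: "T (0, c) \<in> {1, 2}" if "k \<le> c" "c < N" for c
    using in_range[of "(0, c)"] that by simp linarith
  have row0_mono: "T (0, c) \<le> T (0, c')" if "k \<le> c" "c < c'" "c' < N" for c c'
    using row that by simp
  obtain b where b: "k \<le> b" "b \<le> N"
    and row0: "\<And>c. k \<le> c \<Longrightarrow> c < N \<Longrightarrow> T (0, c) = ones_before b c"
    by (rule weakly_increasing_two_valued_eq_ones_before[OF assms(1) row0_range row0_mono]) auto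
  have row1_range: "T (1, c) \<in> {1, 2}" if "0 \<le> c" "c < j" for c
    using in_range[of "(1, c)"] that by simp linarith
  have row1_mono: "T (1, c) \<le> T (1, c')" if "0 \<le> c" "c < c'" "c' < j" for c c'
    using row that by simp
  obtain a where a: "a \<le> j" and row1: "\<And>c. c < j \<Longrightarrow> T (1, c) = ones_before a c"
    by (rule weakly_increasing_two_valued_eq_ones_before[OF le0 row1_range row1_mono]) auto
  have "T (i, c) = two_row_tableau N j k a b (i, c)" for i c
    using outside[of "(i, c)"] row0[of c] row1[of c] by (auto simp: two_row_tableau_def)
  then have "T = two_row_tableau N j k a b" by auto
  with a b show thesis by (rule that)
qed

text \<open>Rows are weakly increasing by construction; column strictness can only fail in column
  \<open>k\<close> (a 1 above a 1 if \<open>k < a\<close>) or in column \<open>b\<close> (a 2 above a 2 if \<open>b < j\<close>).\<close>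
lemma two_row_tableau_in_ssyt_iff:
  assumes "j \<le> N" "k \<le> N" "a \<le> j" "k \<le> b" "b \<le> N"
  shows "two_row_tableau N j k a b \<in> ssyt 2 (two_row_cells N j k) \<longleftrightarrow> a \<le> k \<and> j \<le> b"
proof
  assume "a \<le> k \<and> j \<le> b"
  then show "two_row_tableau N j k a b \<in> ssyt 2 (two_row_cells N j k)"
    using assms unfolding ssyt_def by (auto simp: two_row_tableau_def ones_before_def)
next
  assume "two_row_tableau N j k a b \<in> ssyt 2 (two_row_cells N j k)"
  then have column: "two_row_tableau N j k a b (0, c) < two_row_tableau N j k a b (1, c)"
    if "k \<le> c" "c < N" "c < j" for c
    using that unfolding ssyt_def by auto
  have "a \<le> k"
  proof (rule ccontr)
    assume "\<not> a \<le> k"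
    then have "k < j" "k < N" using assms by auto
    then show False
      using column[of k] \<open>\<not> a \<le> k\<close> assms
      by (simp add: two_row_tableau_def ones_before_def split: if_splits)
  qed
  moreover have "j \<le> b"
  proof (rule ccontr)
    assume "\<not> j \<le> b"
    then have "b < j" "b < N" using assms by auto
    then show False
      using column[of b] assms by (simp add: two_row_tableau_def ones_before_def split: if_splits)
  qed
  ultimately show "a \<le> k \<and> j \<le> b" ..
qed

lemma ssyt_two_row_cells:
  assumes "j \<le> N" "k \<le> N"
  shows "ssyt 2 (two_row_cells N j k)
       = (\<lambda>(a, b). two_row_tableau N j k a b) ` ({0..min j k} \<times> {max j k..N})"
proof (intro equalityI subsetI)
  fix T assume "T \<in> ssyt 2 (two_row_cells N j k)"
  moreover obtain a b where "a \<le> j" "k \<le> b" "b \<le> N" and T: "T = two_row_tableau N j k a b"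
    using ssyt_two_row_cells_obtain_cut_points[OF assms(2) \<open>T \<in> _\<close>] .
  ultimately have "a \<le> k" "j \<le> b"
    using two_row_tableau_in_ssyt_iff[OF assms \<open>a \<le> j\<close> \<open>k \<le> b\<close> \<open>b \<le> N\<close>] by auto
  with \<open>a \<le> j\<close> \<open>k \<le> b\<close> \<open>b \<le> N\<close>
  show "T \<in> (\<lambda>(a, b). two_row_tableau N j k a b) ` ({0..min j k} \<times> {max j k..N})"
    unfolding T by (intro rev_image_eqI[of "(a, b)"]) auto
next
  fix T assume "T \<in> (\<lambda>(a, b). two_row_tableau N j k a b) ` ({0..min j k} \<times> {max j k..N})"
  then obtain a b where "a \<le> min j k" "max j k \<le> b" "b \<le> N" and "T = two_row_tableau N j k a b"
    by auto
  with two_row_tableau_in_ssyt_iff[OF assms, of a b] show "T \<in> ssyt 2 (two_row_cells N j k)"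
    by simp
qed

lemma inj_on_two_row_tableau:
  assumes "j \<le> N" "k \<le> N"
  shows "inj_on (\<lambda>(a, b). two_row_tableau N j k a b) ({0..min j k} \<times> {max j k..N})"
proof (rule inj_onI, clarify)
  fix a b a' b'
  assume ranges: "a \<in> {0..min j k}" "b \<in> {max j k..N}" "a' \<in> {0..min j k}" "b' \<in> {max j k..N}"
    and same: "two_row_tableau N j k a b = two_row_tableau N j k a' b'"
  have second_row: "ones_before a c = ones_before a' c" if "c < j" for c
    using fun_cong[OF same, of "(1, c)"] that by (simp add: two_row_tableau_def)
  have "a = a'" by (rule ones_before_eq_imp_eq[of 0 a j a']) (use ranges second_row in auto)
  have first_row: "ones_before b c = ones_before b' c" if "k \<le> c" "c < N" for c
    using fun_cong[OF same, of "(0, c)"] that by (simp add: two_row_tableau_def)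
  have "b = b'" by (rule ones_before_eq_imp_eq[of k b N b']) (use ranges first_row in auto)
  with \<open>a = a'\<close> show "a = a' \<and> b = b'" ..
qed

lemma prod_two_row_tableau:
  assumes "k \<le> N" "a \<le> j" "k \<le> b" "b \<le> N"
  shows "(\<Prod>p \<in> two_row_cells N j k. w (two_row_tableau N j k a b p))
       = w 1 ^ (b - k) * w 2 ^ (N - b) * (w 1 ^ a * w 2 ^ (j - a))"
proof -
  have prod_Pair_image: "(\<Prod>p \<in> Pair i ` A. g p) = (\<Prod>c\<in>A. g (i, c))" for i :: nat and A g
    by (simp add: prod.reindex inj_on_def)
  have "(\<Prod>p \<in> two_row_cells N j k. w (two_row_tableau N j k a b p))
      = (\<Prod>p \<in> Pair 0 ` {k..<N}. w (two_row_tableau N j k a b p))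
        * (\<Prod>p \<in> Pair 1 ` {0..<j}. w (two_row_tableau N j k a b p))"
    unfolding two_row_cells_def by (rule prod.union_disjoint) auto
  also have "\<dots> = (\<Prod>c=k..<N. w (ones_before b c)) * (\<Prod>c=0..<j. w (ones_before a c))"
    unfolding prod_Pair_image
    by (intro arg_cong2[where f = "(*)"] prod.cong) (auto simp: two_row_tableau_def)
  finally show ?thesis using assms by (simp add: prod_ones_before)
qed

lemma skew_schur_two_rows_one_box:
  fixes x y :: complex and N j k :: nat
  assumes "x \<noteq> 0" "y \<noteq> 0" "j \<le> N" "k \<le> N"
  shows "skew_schur 2 (\<lambda>i. if i = 1 then x else inverse y) [N, j] [k]
       = 1 / (x ^ k * y ^ (N + j)) * (\<Sum>r=0..min j k. (x * y) ^ r) * (\<Sum>r=max j k..N. (x * y) ^ r)"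
proof -
  define w where "w = (\<lambda>i :: nat. if i = 1 then x else inverse y)"
  define C where "C = 1 / (x ^ k * y ^ (N + j))"
  let ?A = "{0..min j k} \<times> {max j k..N}"
  have weight: "(\<Prod>p \<in> two_row_cells N j k. w (two_row_tableau N j k a b p)) = C * ((x * y) ^ a * (x * y) ^ b)"
    if "(a, b) \<in> ?A" for a b
  proof -
    have "x ^ b = x ^ (b - k) * x ^ k" "y ^ (N + j) = y ^ (N - b) * y ^ (j - a) * y ^ a * y ^ b"
      using that assms(4) by (simp_all flip: power_add)
    then show ?thesis
      using that assms prod_two_row_tableau[of k N a j b w]
      by (simp add: C_def w_def field_simps)
  qed
  have "diagram [k] \<subseteq> diagram [N, j]" using assms(4) by (auto simp: diagram_def)
  then have "skew_schur 2 w [N, j] [k] = (\<Sum>T \<in> ssyt 2 (two_row_cells N j k). \<Prod>p \<in> two_row_cells N j k. w (T p))"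
    using assms(3,4) by (simp add: skew_schur_def skew_diagram_two_rows)
  also have "\<dots> = (\<Sum>(a, b)\<in>?A. \<Prod>p \<in> two_row_cells N j k. w (two_row_tableau N j k a b p))"
    unfolding ssyt_two_row_cells[OF assms(3,4)]
    by (subst sum.reindex[OF inj_on_two_row_tableau[OF assms(3,4)]]) (simp add: case_prod_unfold)
  also have "\<dots> = (\<Sum>(a, b)\<in>?A. C * ((x * y) ^ a * (x * y) ^ b))"
    by (rule sum.cong) (auto simp: weight)
  also have "\<dots> = C * (\<Sum>a=0..min j k. \<Sum>b=max j k..N. (x * y) ^ a * (x * y) ^ b)"
    by (simp add: sum_distrib_left sum.cartesian_product case_prod_unfold)
  also have "\<dots> = C * ((\<Sum>r=0..min j k. (x * y) ^ r) * (\<Sum>r=max j k..N. (x * y) ^ r))"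
    by (simp add: sum_product)
  finally show ?thesis unfolding w_def C_def by (simp only: mult.assoc)
qed

theorem mainTheorem4:
  fixes x y s :: complex and N j k :: nat
  assumes "x \<noteq> 0" "y \<noteq> 0" "N \<ge> 1" "j \<le> N" "k \<le> N"
    and "s ^ 2 = x * y"
  defines "m \<equiv> min j k" and "M \<equiv> max j k" and "c \<equiv> (1 + x * y) / (2 * s)"
  shows "skew_schur 2 (\<lambda>i. if i = 1 then x else inverse y) [N, j] [k]
           = (s / y) ^ (N + j - k) * chebU m c * chebU (N - M) c
         \<and> (s / y) ^ (N + j - k) * chebU m c * chebU (N - M) c
           = 1 / (x ^ k * y ^ (N + j)) * (\<Sum>r=0..m. (x * y) ^ r) * (\<Sum>r=M..N. (x * y) ^ r)"
  using skew_schur_two_rows_one_box[OF assms(1,2,4,5)]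
    chebU_product_eq_geometric_sums[OF assms(1,2,4,5,6)]
  unfolding m_def M_def c_def by simp

end
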